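(* Let $\mu_1,\mu_2$ be probabilities on $(\Omega,\mathcal B_\Omega)$ and $\eta_1,\eta_2$ probabilities on $(\Lambda,\mathcal B_\Lambda)$, and consider the product probabilities $\mu_1\times\eta_1,\mu_2\times\eta_2$ on the product $\sigma$-field. Then: (1) $\mu_1\times\eta_1\ll\mu_2\times\eta_2$ if and only if $\mu_1\ll\mu_2$ and $\eta_1\ll\eta_2$; (2) if $\Omega,\Lambda$ are one-sided sequence spaces with shifts $T_\Omega,T_\Lambda$ (product shift $T_\Omega\times T_\Lambda$) and $\mu_2,\eta_2$ are stationary, then $\mu_1\times\eta_1\ll^a\mu_2\times\eta_2$ if and only if $\mu_1\ll^a\mu_2$ and $\eta_1\ll^a\eta_2$.
   Context: $\ll$ denotes absolute continuity. Asymptotic dominance: $\mu\ll^a\eta$ means that for every measurable $E$, $\eta(E)=0$ implies $\lim_{n\to\infty}\mu(T^{-n}E)=0$. Stationary: $\mu(T^{-1}E)=\mu(E)$ for all $E$. *)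

theory Defs
  imports "HOL-Analysis.Analysis" "HOL-Probability.Probability"
begin

definition shift :: "(nat \<Rightarrow> 'a) \<Rightarrow> (nat \<Rightarrow> 'a)" where
  "shift x = (\<lambda>n. x (Suc n))"

definition stationary :: "('a \<Rightarrow> 'a) \<Rightarrow> 'a measure \<Rightarrow> bool" where
  "stationary T \<mu> \<longleftrightarrow> (\<forall>E \<in> sets \<mu>. emeasure \<mu> (T -` E \<inter> space \<mu>) = emeasure \<mu> E)"

definition asymp_dominated :: "('a \<Rightarrow> 'a) \<Rightarrow> 'a measure \<Rightarrow> 'a measure \<Rightarrow> bool" where
  "asymp_dominated T \<mu> \<eta> \<longleftrightarrow>
     (\<forall>E \<in> sets \<eta>. emeasure \<eta> E = 0 \<longrightarrow>
        (\<lambda>n. measure \<mu> ((T ^^ n) -` E \<inter> space \<mu>)) \<longlonglongrightarrow> 0)"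

end

theory Submission
  imports Defs
begin

text \<open>
  A product null set E restricts to null cylinders A \<times> \<Lambda> and \<Omega> \<times> B, which gives the
  easy implications. Conversely, a finite measure \<mu> on the \<sigma>-algebra of \<nu> has a \<nu>-null set G
  carrying its whole \<nu>-singular part, \<mu>(F - G) = 0 for every \<nu>-null F (take G maximising \<mu> over
  \<nu>-null sets). By Fubini almost every section of E is null, so the corresponding sets G, H give
  (\<mu>1 \<times> \<eta>1)(E) \<le> \<mu>1(G) + \<eta>1(H); with G = H = {} this is (1). For (2) apply the bound to the
  push-forwards of \<mu>1, \<eta>1 under T^n, with a single G (a countable union) serving all n: then
  (\<mu>1 \<times> \<eta>1)(T^-n E) \<le> \<mu>1(T^-n G) + \<eta>1(T^-n H) \<longrightarrow> 0.
\<close>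

lemma (in finite_measure) ex_null_set_absorbing:
  assumes "sets M = sets N"
  shows "\<exists>G\<in>null_sets N. \<forall>F\<in>null_sets N. emeasure M (F - G) = 0"
proof -
  have null_sub: "null_sets N \<subseteq> sets M"
    using assms by auto
  define c where "c = (SUP F\<in>null_sets N. emeasure M F)"
  have ne: "null_sets N \<noteq> {}"
    using null_sets.empty_sets by blast
  obtain m :: "nat \<Rightarrow> ennreal" where m: "range m \<subseteq> emeasure M ` null_sets N" "c = (SUP k. m k)"
    using ennreal_SUP_countable_SUP[OF ne, of "emeasure M"] unfolding c_def by blast
  then have "\<forall>k. \<exists>F\<in>null_sets N. m k = emeasure M F"
    by (auto simp: image_subset_iff)
  then obtain Fs where Fs: "\<And>k. Fs k \<in> null_sets N" "\<And>k. m k = emeasure M (Fs k)"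
    by metis
  define G where "G = (\<Union>k. Fs k)"
  have G: "G \<in> null_sets N"
    using Fs(1) by (auto simp: G_def)
  then have "G \<in> sets M"
    using null_sub by auto
  have "c \<le> emeasure M G"
    unfolding m(2) Fs(2) G_def using Fs(1) null_sub
    by (intro SUP_least emeasure_mono) auto
  show ?thesis
  proof (intro bexI[OF _ G] ballI)
    fix F assume F: "F \<in> null_sets N"
    have "emeasure M G + emeasure M (F - G) = emeasure M (G \<union> F)"
      using \<open>G \<in> sets M\<close> F null_sub by (subst plus_emeasure) (auto intro!: arg_cong[where f="emeasure M"])
    also have "\<dots> \<le> c"
      unfolding c_def using G F by (intro SUP_upper) auto
    also have "\<dots> \<le> emeasure M G + 0"
      using \<open>c \<le> emeasure M G\<close> by simp
    finally show "emeasure M (F - G) = 0"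
      using emeasure_real by (subst (asm) ennreal_add_left_cancel_le) auto
  qed
qed

lemma ex_null_set_absorbing_seq:
  fixes M :: "nat \<Rightarrow> 'a measure"
  assumes "\<And>n. finite_measure (M n)" "\<And>n. sets (M n) = sets N"
  shows "\<exists>G\<in>null_sets N. \<forall>n. \<forall>F\<in>null_sets N. emeasure (M n) (F - G) = 0"
proof -
  obtain Gs where Gs: "\<And>n. Gs n \<in> null_sets N"
    "\<And>n F. F \<in> null_sets N \<Longrightarrow> emeasure (M n) (F - Gs n) = 0"
    using finite_measure.ex_null_set_absorbing[OF assms] by metis
  show ?thesis
  proof (intro bexI allI ballI)
    fix n F assume F: "F \<in> null_sets N"
    have "emeasure (M n) (F - (\<Union>n. Gs n)) \<le> emeasure (M n) (F - Gs n)"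
      using F Gs(1)[of n] assms(2) by (intro emeasure_mono) auto
    then show "emeasure (M n) (F - (\<Union>n. Gs n)) = 0"
      using Gs(2)[OF F] by simp
  qed (use Gs(1) in auto)
qed

lemma AE_absorbing_null_set:
  assumes "sets M = sets N" "G \<in> sets M" "\<forall>F\<in>null_sets N. emeasure M (F - G) = 0"
    and "AE x in N. P x"
  shows "AE x in M. x \<in> G \<or> P x"
proof -
  obtain F where F: "F \<in> null_sets N" "{x \<in> space N. \<not> P x} \<subseteq> F"
    using assms(4) unfolding eventually_ae_filter by blast
  show ?thesis
  proof (rule AE_I')
    show "F - G \<in> null_sets M"
      using F assms by (auto simp: null_sets_def)
    show "{x \<in> space M. \<not> (x \<in> G \<or> P x)} \<subseteq> F - G"
      using F(2) sets_eq_imp_space_eq[OF assms(1)] by auto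
  qed
qed

lemma emeasure_pair_le_absorbing_null_sets:
  assumes "prob_space M1" "prob_space M2" "sigma_finite_measure N1" "sigma_finite_measure N2"
    and sets: "sets M1 = sets N1" "sets M2 = sets N2"
    and G: "G \<in> sets M1" "\<forall>F\<in>null_sets N1. emeasure M1 (F - G) = 0"
    and H: "H \<in> sets M2" "\<forall>F\<in>null_sets N2. emeasure M2 (F - H) = 0"
    and E: "E \<in> null_sets (N1 \<Otimes>\<^sub>M N2)"
  shows "emeasure (M1 \<Otimes>\<^sub>M M2) E \<le> emeasure M1 G + emeasure M2 H"
proof -
  interpret M: pair_prob_space M1 M2
    using assms(1,2) by (simp add: pair_prob_space_def pair_sigma_finite_def prob_space_imp_sigma_finite)
  interpret N: pair_sigma_finite N1 N2
    using assms(3,4) by (simp add: pair_sigma_finite_def)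
  have E_sets: "E \<in> sets (M1 \<Otimes>\<^sub>M M2)"
    using E sets_pair_measure_cong[OF sets] by auto
  have "AE x in N1. AE y in N2. (x, y) \<notin> E"
    using E by (intro N.AE_pair AE_not_in)
  then have "AE x in M1. x \<in> G \<or> (AE y in N2. (x, y) \<notin> E)"
    by (rule AE_absorbing_null_set[OF sets(1) G])
  then have "AE x in M1. AE y in M2. x \<in> G \<or> y \<in> H \<or> (x, y) \<notin> E"
    using AE_absorbing_null_set[OF sets(2) H] by (auto elim!: AE_mp)
  then have "AE z in M1 \<Otimes>\<^sub>M M2. fst z \<in> G \<or> snd z \<in> H \<or> z \<notin> E"
    using E_sets G(1) H(1) by (intro M.AE_pair_measure) (auto simp: space_pair_measure)
  then have "emeasure (M1 \<Otimes>\<^sub>M M2) E \<le> emeasure (M1 \<Otimes>\<^sub>M M2) (G \<times> space M2 \<union> space M1 \<times> H)"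
    using G(1) H(1) by (intro emeasure_mono_AE) (auto simp: space_pair_measure elim!: AE_mp)
  also have "\<dots> \<le> emeasure (M1 \<Otimes>\<^sub>M M2) (G \<times> space M2) + emeasure (M1 \<Otimes>\<^sub>M M2) (space M1 \<times> H)"
    using G(1) H(1) by (intro emeasure_subadditive) auto
  also have "\<dots> = emeasure M1 G + emeasure M2 H"
    using G(1) H(1) by (simp add: M.M2.emeasure_pair_measure_Times M.M1.emeasure_space_1 M.M2.emeasure_space_1)
  finally show ?thesis .
qed

lemma absolutely_continuous_fst_of_pair:
  assumes "prob_space \<eta>1" "prob_space \<eta>2" "sets \<eta>1 = sets \<eta>2" "sets \<mu>1 = sets \<mu>2"
    and "absolutely_continuous (\<mu>2 \<Otimes>\<^sub>M \<eta>2) (\<mu>1 \<Otimes>\<^sub>M \<eta>1)"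
  shows "absolutely_continuous \<mu>2 \<mu>1"
  unfolding absolutely_continuous_def
proof
  interpret \<eta>1: prob_space \<eta>1 by fact
  interpret \<eta>2: prob_space \<eta>2 by fact
  fix A assume A: "A \<in> null_sets \<mu>2"
  then have "A \<times> space \<eta>2 \<in> null_sets (\<mu>1 \<Otimes>\<^sub>M \<eta>1)"
    using assms(5) unfolding absolutely_continuous_def by auto
  moreover have "A \<in> sets \<mu>1"
    using A assms(4) by auto
  ultimately show "A \<in> null_sets \<mu>1"
    using sets_eq_imp_space_eq[OF assms(3), symmetric]
    by (simp add: \<eta>1.emeasure_pair_measure_Times \<eta>1.emeasure_space_1 null_sets_def)
qed

lemma absolutely_continuous_snd_of_pair:
  assumes "prob_space \<mu>1" "sets \<mu>1 = sets \<mu>2" "prob_space \<eta>1" "prob_space \<eta>2" "sets \<eta>1 = sets \<eta>2"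
    and "absolutely_continuous (\<mu>2 \<Otimes>\<^sub>M \<eta>2) (\<mu>1 \<Otimes>\<^sub>M \<eta>1)"
  shows "absolutely_continuous \<eta>2 \<eta>1"
  unfolding absolutely_continuous_def
proof
  interpret \<mu>1: prob_space \<mu>1 by fact
  interpret \<eta>1: prob_space \<eta>1 by fact
  interpret \<eta>2: prob_space \<eta>2 by fact
  fix B assume B: "B \<in> null_sets \<eta>2"
  then have "space \<mu>2 \<times> B \<in> null_sets (\<mu>1 \<Otimes>\<^sub>M \<eta>1)"
    using assms(6) unfolding absolutely_continuous_def by auto
  moreover have "B \<in> sets \<eta>1"
    using B assms(5) by auto
  ultimately show "B \<in> null_sets \<eta>1"
    using sets_eq_imp_space_eq[OF assms(2), symmetric]
    by (simp add: \<eta>1.emeasure_pair_measure_Times \<mu>1.emeasure_space_1 null_sets_def)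
qed

lemma absolutely_continuous_pair:
  assumes "prob_space \<mu>1" "prob_space \<mu>2" "sets \<mu>1 = sets \<mu>2"
    and "prob_space \<eta>1" "prob_space \<eta>2" "sets \<eta>1 = sets \<eta>2"
    and "absolutely_continuous \<mu>2 \<mu>1" "absolutely_continuous \<eta>2 \<eta>1"
  shows "absolutely_continuous (\<mu>2 \<Otimes>\<^sub>M \<eta>2) (\<mu>1 \<Otimes>\<^sub>M \<eta>1)"
  unfolding absolutely_continuous_def
proof
  fix E assume E: "E \<in> null_sets (\<mu>2 \<Otimes>\<^sub>M \<eta>2)"
  have "emeasure (\<mu>1 \<Otimes>\<^sub>M \<eta>1) E \<le> emeasure \<mu>1 {} + emeasure \<eta>1 {}"
    using assms E
    by (intro emeasure_pair_le_absorbing_null_sets)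
       (auto simp: absolutely_continuous_def prob_space_imp_sigma_finite)
  moreover have "E \<in> sets (\<mu>1 \<Otimes>\<^sub>M \<eta>1)"
    using E sets_pair_measure_cong[OF assms(3,6)] by auto
  ultimately show "E \<in> null_sets (\<mu>1 \<Otimes>\<^sub>M \<eta>1)"
    by auto
qed

lemma absolutely_continuous_pair_iff:
  assumes "prob_space \<mu>1" "prob_space \<mu>2" "sets \<mu>1 = sets \<mu>2"
    and "prob_space \<eta>1" "prob_space \<eta>2" "sets \<eta>1 = sets \<eta>2"
  shows "absolutely_continuous (\<mu>2 \<Otimes>\<^sub>M \<eta>2) (\<mu>1 \<Otimes>\<^sub>M \<eta>1) \<longleftrightarrow>
    absolutely_continuous \<mu>2 \<mu>1 \<and> absolutely_continuous \<eta>2 \<eta>1"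
  using assms absolutely_continuous_pair absolutely_continuous_fst_of_pair absolutely_continuous_snd_of_pair
  by metis

lemma measurable_funpow: "f \<in> measurable M M \<Longrightarrow> f ^^ n \<in> measurable M M"
  by (induction n) auto

lemma funpow_map_prod:
  fixes f :: "'a \<Rightarrow> 'a" and g :: "'b \<Rightarrow> 'b"
  shows "map_prod f g ^^ n = map_prod (f ^^ n) (g ^^ n)"
  by (induction n) (simp_all add: map_prod.comp comp_def fun_eq_iff)

lemma measurable_shift: "shift \<in> measurable (PiM UNIV (\<lambda>_. A)) (PiM UNIV (\<lambda>_. A))"
  unfolding shift_def by (rule measurable_PiM_single') (auto simp: space_PiM)

lemma asymp_dominated_fst_of_pair:
  assumes "prob_space \<rho>1" "prob_space \<rho>2" "sets \<nu>1 = sets \<nu>2" "sets \<rho>1 = sets \<rho>2"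
    and T: "T \<in> measurable \<nu>2 \<nu>2" and S: "S \<in> measurable \<rho>2 \<rho>2"
    and "asymp_dominated (map_prod T S) (\<nu>1 \<Otimes>\<^sub>M \<rho>1) (\<nu>2 \<Otimes>\<^sub>M \<rho>2)"
  shows "asymp_dominated T \<nu>1 \<nu>2"
  unfolding asymp_dominated_def
proof (intro ballI impI)
  interpret \<rho>1: prob_space \<rho>1 by fact
  interpret \<rho>2: prob_space \<rho>2 by fact
  fix E assume E: "E \<in> sets \<nu>2" "emeasure \<nu>2 E = 0"
  have "E \<times> space \<rho>2 \<in> null_sets (\<nu>2 \<Otimes>\<^sub>M \<rho>2)"
    using E by auto
  then have "(\<lambda>n. measure (\<nu>1 \<Otimes>\<^sub>M \<rho>1) ((map_prod T S ^^ n) -` (E \<times> space \<rho>2) \<inter> space (\<nu>1 \<Otimes>\<^sub>M \<rho>1))) \<longlonglongrightarrow> 0"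
    using assms(7) unfolding asymp_dominated_def by auto
  moreover have "(map_prod T S ^^ n) -` (E \<times> space \<rho>2) \<inter> space (\<nu>1 \<Otimes>\<^sub>M \<rho>1)
      = ((T ^^ n) -` E \<inter> space \<nu>1) \<times> space \<rho>1" for n
    using measurable_space[OF measurable_funpow[OF S, of n]] sets_eq_imp_space_eq[OF assms(4)]
    by (auto simp: funpow_map_prod space_pair_measure)
  moreover have "(T ^^ n) -` E \<inter> space \<nu>1 \<in> sets \<nu>1" for n
    using measurable_sets[OF measurable_funpow[OF T, of n] E(1)] assms(3) sets_eq_imp_space_eq[OF assms(3)]
    by simp
  ultimately show "(\<lambda>n. measure \<nu>1 ((T ^^ n) -` E \<inter> space \<nu>1)) \<longlonglongrightarrow> 0"
    by (simp add: measure_def \<rho>1.emeasure_pair_measure_Times \<rho>1.emeasure_space_1)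
qed

lemma asymp_dominated_snd_of_pair:
  assumes "prob_space \<nu>1" "prob_space \<rho>1" "prob_space \<rho>2" "sets \<nu>1 = sets \<nu>2" "sets \<rho>1 = sets \<rho>2"
    and T: "T \<in> measurable \<nu>2 \<nu>2" and S: "S \<in> measurable \<rho>2 \<rho>2"
    and "asymp_dominated (map_prod T S) (\<nu>1 \<Otimes>\<^sub>M \<rho>1) (\<nu>2 \<Otimes>\<^sub>M \<rho>2)"
  shows "asymp_dominated S \<rho>1 \<rho>2"
  unfolding asymp_dominated_def
proof (intro ballI impI)
  interpret \<nu>1: prob_space \<nu>1 by fact
  interpret \<rho>1: prob_space \<rho>1 by fact
  interpret \<rho>2: prob_space \<rho>2 by fact
  fix E assume E: "E \<in> sets \<rho>2" "emeasure \<rho>2 E = 0"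
  have "space \<nu>2 \<times> E \<in> null_sets (\<nu>2 \<Otimes>\<^sub>M \<rho>2)"
    using E by auto
  then have "(\<lambda>n. measure (\<nu>1 \<Otimes>\<^sub>M \<rho>1) ((map_prod T S ^^ n) -` (space \<nu>2 \<times> E) \<inter> space (\<nu>1 \<Otimes>\<^sub>M \<rho>1))) \<longlonglongrightarrow> 0"
    using assms(8) unfolding asymp_dominated_def by auto
  moreover have "(map_prod T S ^^ n) -` (space \<nu>2 \<times> E) \<inter> space (\<nu>1 \<Otimes>\<^sub>M \<rho>1)
      = space \<nu>1 \<times> ((S ^^ n) -` E \<inter> space \<rho>1)" for n
    using measurable_space[OF measurable_funpow[OF T, of n]] sets_eq_imp_space_eq[OF assms(4)]
    by (auto simp: funpow_map_prod space_pair_measure)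
  moreover have "(S ^^ n) -` E \<inter> space \<rho>1 \<in> sets \<rho>1" for n
    using measurable_sets[OF measurable_funpow[OF S, of n] E(1)] assms(5) sets_eq_imp_space_eq[OF assms(5)]
    by simp
  ultimately show "(\<lambda>n. measure \<rho>1 ((S ^^ n) -` E \<inter> space \<rho>1)) \<longlonglongrightarrow> 0"
    by (simp add: measure_def \<rho>1.emeasure_pair_measure_Times \<nu>1.emeasure_space_1)
qed

lemma measure_vimage_pair_le_absorbing_null_sets:
  assumes "prob_space \<nu>1" "prob_space \<nu>2" "prob_space \<rho>1" "prob_space \<rho>2"
    and f: "f \<in> measurable \<nu>1 \<nu>2" and g: "g \<in> measurable \<rho>1 \<rho>2"
    and G: "G \<in> sets \<nu>2" "\<forall>F\<in>null_sets \<nu>2. emeasure (distr \<nu>1 \<nu>2 f) (F - G) = 0"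
    and H: "H \<in> sets \<rho>2" "\<forall>F\<in>null_sets \<rho>2. emeasure (distr \<rho>1 \<rho>2 g) (F - H) = 0"
    and E: "E \<in> null_sets (\<nu>2 \<Otimes>\<^sub>M \<rho>2)"
  shows "measure (\<nu>1 \<Otimes>\<^sub>M \<rho>1) (map_prod f g -` E \<inter> space (\<nu>1 \<Otimes>\<^sub>M \<rho>1))
    \<le> measure \<nu>1 (f -` G \<inter> space \<nu>1) + measure \<rho>1 (g -` H \<inter> space \<rho>1)"
proof -
  interpret \<nu>1: prob_space \<nu>1 by fact
  interpret \<rho>1: prob_space \<rho>1 by fact
  have f\<nu>: "prob_space (distr \<nu>1 \<nu>2 f)" and g\<rho>: "prob_space (distr \<rho>1 \<rho>2 g)"
    using \<nu>1.prob_space_distr[OF f] \<rho>1.prob_space_distr[OF g] .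
  have map_prod_eq: "map_prod f g = (\<lambda>(x, y). (f x, g y))"
    by (simp add: map_prod_def)
  have fg: "map_prod f g \<in> measurable (\<nu>1 \<Otimes>\<^sub>M \<rho>1) (\<nu>2 \<Otimes>\<^sub>M \<rho>2)"
    unfolding map_prod_eq using f g by measurable
  have "measure (\<nu>1 \<Otimes>\<^sub>M \<rho>1) (map_prod f g -` E \<inter> space (\<nu>1 \<Otimes>\<^sub>M \<rho>1))
      = measure (distr \<nu>1 \<nu>2 f \<Otimes>\<^sub>M distr \<rho>1 \<rho>2 g) E"
    using null_setsD2[OF E] fg g\<rho>
    by (simp add: measure_distr pair_measure_distr[OF f g] prob_space_imp_sigma_finite map_prod_eq)
  also have "\<dots> \<le> measure (distr \<nu>1 \<nu>2 f) G + measure (distr \<rho>1 \<rho>2 g) H"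
  proof -
    interpret \<nu>2\<rho>1: pair_prob_space "distr \<nu>1 \<nu>2 f" "distr \<rho>1 \<rho>2 g"
      using f\<nu> g\<rho> by (simp add: pair_prob_space_def pair_sigma_finite_def prob_space_imp_sigma_finite)
    have "emeasure (distr \<nu>1 \<nu>2 f \<Otimes>\<^sub>M distr \<rho>1 \<rho>2 g) E
        \<le> emeasure (distr \<nu>1 \<nu>2 f) G + emeasure (distr \<rho>1 \<rho>2 g) H"
      using assms f\<nu> g\<rho> by (intro emeasure_pair_le_absorbing_null_sets) (auto simp: prob_space_imp_sigma_finite)
    then show ?thesis
      by (simp add: \<nu>2\<rho>1.emeasure_eq_measure \<nu>2\<rho>1.M1.emeasure_eq_measure \<nu>2\<rho>1.M2.emeasure_eq_measure
          flip: ennreal_plus)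
  qed
  also have "\<dots> = measure \<nu>1 (f -` G \<inter> space \<nu>1) + measure \<rho>1 (g -` H \<inter> space \<rho>1)"
    using G(1) H(1) by (simp add: measure_distr[OF f] measure_distr[OF g])
  finally show ?thesis .
qed

lemma asymp_dominated_pair:
  assumes "prob_space \<nu>1" "prob_space \<nu>2" "prob_space \<rho>1" "prob_space \<rho>2"
    and sets: "sets \<nu>1 = sets \<nu>2" "sets \<rho>1 = sets \<rho>2"
    and T: "T \<in> measurable \<nu>2 \<nu>2" and S: "S \<in> measurable \<rho>2 \<rho>2"
    and "asymp_dominated T \<nu>1 \<nu>2" "asymp_dominated S \<rho>1 \<rho>2"
  shows "asymp_dominated (map_prod T S) (\<nu>1 \<Otimes>\<^sub>M \<rho>1) (\<nu>2 \<Otimes>\<^sub>M \<rho>2)"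
  unfolding asymp_dominated_def
proof (intro ballI impI)
  interpret \<nu>1: prob_space \<nu>1 by fact
  interpret \<rho>1: prob_space \<rho>1 by fact
  have Tn: "T ^^ n \<in> measurable \<nu>1 \<nu>2" and Sn: "S ^^ n \<in> measurable \<rho>1 \<rho>2" for n
    using measurable_funpow[OF T] measurable_funpow[OF S] sets by (simp_all cong: measurable_cong_sets)
  obtain G where G: "G \<in> null_sets \<nu>2" "\<And>n. \<forall>F\<in>null_sets \<nu>2. emeasure (distr \<nu>1 \<nu>2 (T ^^ n)) (F - G) = 0"
    using ex_null_set_absorbing_seq[of "\<lambda>n. distr \<nu>1 \<nu>2 (T ^^ n)" \<nu>2]
      \<nu>1.prob_space_distr[OF Tn] by (auto simp: prob_space.finite_measure)
  obtain H where H: "H \<in> null_sets \<rho>2" "\<And>n. \<forall>F\<in>null_sets \<rho>2. emeasure (distr \<rho>1 \<rho>2 (S ^^ n)) (F - H) = 0"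
    using ex_null_set_absorbing_seq[of "\<lambda>n. distr \<rho>1 \<rho>2 (S ^^ n)" \<rho>2]
      \<rho>1.prob_space_distr[OF Sn] by (auto simp: prob_space.finite_measure)
  fix E assume "E \<in> sets (\<nu>2 \<Otimes>\<^sub>M \<rho>2)" "emeasure (\<nu>2 \<Otimes>\<^sub>M \<rho>2) E = 0"
  then have E: "E \<in> null_sets (\<nu>2 \<Otimes>\<^sub>M \<rho>2)"
    by auto
  have bound: "measure (\<nu>1 \<Otimes>\<^sub>M \<rho>1) ((map_prod T S ^^ n) -` E \<inter> space (\<nu>1 \<Otimes>\<^sub>M \<rho>1))
      \<le> measure \<nu>1 ((T ^^ n) -` G \<inter> space \<nu>1) + measure \<rho>1 ((S ^^ n) -` H \<inter> space \<rho>1)" for n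
    unfolding funpow_map_prod using G(1) H(1)
    by (intro measure_vimage_pair_le_absorbing_null_sets[OF assms(1-4) Tn Sn _ G(2)[of n] _ H(2)[of n] E]) auto
  have "(\<lambda>n. measure \<nu>1 ((T ^^ n) -` G \<inter> space \<nu>1)) \<longlonglongrightarrow> 0"
    and "(\<lambda>n. measure \<rho>1 ((S ^^ n) -` H \<inter> space \<rho>1)) \<longlonglongrightarrow> 0"
    using assms(9,10) G(1) H(1) unfolding asymp_dominated_def by auto
  from tendsto_add[OF this]
  have lim: "(\<lambda>n. measure \<nu>1 ((T ^^ n) -` G \<inter> space \<nu>1) + measure \<rho>1 ((S ^^ n) -` H \<inter> space \<rho>1)) \<longlonglongrightarrow> 0"
    by simp
  show "(\<lambda>n. measure (\<nu>1 \<Otimes>\<^sub>M \<rho>1) ((map_prod T S ^^ n) -` E \<inter> space (\<nu>1 \<Otimes>\<^sub>M \<rho>1))) \<longlonglongrightarrow> 0"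
    by (rule tendsto_sandwich[OF _ _ tendsto_const lim]) (auto intro!: always_eventually bound)
qed

lemma asymp_dominated_pair_iff:
  assumes "prob_space \<nu>1" "prob_space \<nu>2" "prob_space \<rho>1" "prob_space \<rho>2"
    and "sets \<nu>1 = sets \<nu>2" "sets \<rho>1 = sets \<rho>2"
    and "T \<in> measurable \<nu>2 \<nu>2" "S \<in> measurable \<rho>2 \<rho>2"
  shows "asymp_dominated (map_prod T S) (\<nu>1 \<Otimes>\<^sub>M \<rho>1) (\<nu>2 \<Otimes>\<^sub>M \<rho>2) \<longleftrightarrow>
    asymp_dominated T \<nu>1 \<nu>2 \<and> asymp_dominated S \<rho>1 \<rho>2"
  using assms asymp_dominated_pair asymp_dominated_fst_of_pair asymp_dominated_snd_of_pair by metis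

theorem lemma20:
  fixes \<mu>1 \<mu>2 :: "'a measure" and \<eta>1 \<eta>2 :: "'b measure"
  assumes "prob_space \<mu>1" "prob_space \<mu>2" "sets \<mu>1 = sets \<mu>2"
    and "prob_space \<eta>1" "prob_space \<eta>2" "sets \<eta>1 = sets \<eta>2"
  shows "(absolutely_continuous (\<mu>2 \<Otimes>\<^sub>M \<eta>2) (\<mu>1 \<Otimes>\<^sub>M \<eta>1) \<longleftrightarrow>
            absolutely_continuous \<mu>2 \<mu>1 \<and> absolutely_continuous \<eta>2 \<eta>1)
       \<and> (\<forall>(A :: 'c measure) (B :: 'd measure)
            (\<nu>1 :: (nat \<Rightarrow> 'c) measure) \<nu>2 (\<rho>1 :: (nat \<Rightarrow> 'd) measure) \<rho>2.
            prob_space \<nu>1 \<and> prob_space \<nu>2 \<and> prob_space \<rho>1 \<and> prob_space \<rho>2 \<and>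
            sets \<nu>1 = sets (PiM UNIV (\<lambda>_. A)) \<and> sets \<nu>2 = sets (PiM UNIV (\<lambda>_. A)) \<and>
            sets \<rho>1 = sets (PiM UNIV (\<lambda>_. B)) \<and> sets \<rho>2 = sets (PiM UNIV (\<lambda>_. B)) \<and>
            stationary shift \<nu>2 \<and> stationary shift \<rho>2 \<longrightarrow>
            (asymp_dominated (map_prod shift shift) (\<nu>1 \<Otimes>\<^sub>M \<rho>1) (\<nu>2 \<Otimes>\<^sub>M \<rho>2) \<longleftrightarrow>
             asymp_dominated shift \<nu>1 \<nu>2 \<and> asymp_dominated shift \<rho>1 \<rho>2))"
proof (intro conjI allI impI)
  show "absolutely_continuous (\<mu>2 \<Otimes>\<^sub>M \<eta>2) (\<mu>1 \<Otimes>\<^sub>M \<eta>1) \<longleftrightarrow>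
      absolutely_continuous \<mu>2 \<mu>1 \<and> absolutely_continuous \<eta>2 \<eta>1"
    using assms by (rule absolutely_continuous_pair_iff)
next
  fix A :: "'c measure" and B :: "'d measure"
    and \<nu>1 \<nu>2 :: "(nat \<Rightarrow> 'c) measure" and \<rho>1 \<rho>2 :: "(nat \<Rightarrow> 'd) measure"
  assume "prob_space \<nu>1 \<and> prob_space \<nu>2 \<and> prob_space \<rho>1 \<and> prob_space \<rho>2 \<and>
    sets \<nu>1 = sets (PiM UNIV (\<lambda>_. A)) \<and> sets \<nu>2 = sets (PiM UNIV (\<lambda>_. A)) \<and>
    sets \<rho>1 = sets (PiM UNIV (\<lambda>_. B)) \<and> sets \<rho>2 = sets (PiM UNIV (\<lambda>_. B)) \<and>
    stationary shift \<nu>2 \<and> stationary shift \<rho>2"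
  then show "asymp_dominated (map_prod shift shift) (\<nu>1 \<Otimes>\<^sub>M \<rho>1) (\<nu>2 \<Otimes>\<^sub>M \<rho>2) \<longleftrightarrow>
      asymp_dominated shift \<nu>1 \<nu>2 \<and> asymp_dominated shift \<rho>1 \<rho>2"
    by (intro asymp_dominated_pair_iff) (simp_all cong: measurable_cong_sets add: measurable_shift)
qed

end
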